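(* Let $p,q$ be relatively prime positive integers, and let $\mathcal{T}_{q/p,p/q}$ be the triangle with vertices $(0,0)$, $(p/q,0)$ and $(0,q/p)$. Then $q$ is a quasi-period of the Ehrhart quasipolynomial $I(t)=\#(t\mathcal{T}_{q/p,p/q}\cap\mathbb{Z}^2)$ if and only if \[ p\mid(q^2+1)\qquad\text{and}\qquad \gcd\!\left(\frac{q^2+1}{p},\,p\right)=1. \]
   Context: The Ehrhart function of a rational polygon is a quasipolynomial $\sum_i c_i(t)t^i$ with periodic coefficient functions $c_i$; an integer $q$ is a quasi-period if every $c_i$ is periodic with period $q$. *)

theory Defs
  imports "HOL-Analysis.Analysis"
begin

definition triangle :: "real \<Rightarrow> real \<Rightarrow> (real \<times> real) set" where
  "triangle a b = convex hull {(0,0), (a,0), (0,b)}"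

definition ehrhart :: "(real \<times> real) set \<Rightarrow> nat \<Rightarrow> nat" where
  "ehrhart P t = card {z :: int \<times> int. (real_of_int (fst z), real_of_int (snd z)) \<in> (\<lambda>v. real t *\<^sub>R v) ` P}"

definition quasi_period :: "(nat \<Rightarrow> real) \<Rightarrow> nat \<Rightarrow> bool" where
  "quasi_period f q \<longleftrightarrow>
     (\<exists>(d::nat) (c :: nat \<Rightarrow> nat \<Rightarrow> real).
        (\<forall>i\<le>d. \<forall>t. c i (t + q) = c i t) \<and>
        (\<forall>t\<ge>1. f t = (\<Sum>i\<le>d. c i t * real t ^ i)))"

end

theory Submission
  imports Defs "HOL-Number_Theory.Cong" "HOL-Computational_Algebra.Polynomial"
begin

(* Scaling by pq, the lattice points of tT are the (x, y) in N^2 with q^2 x + p^2 y <= pqt.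
  The points of the (t + q)-th dilate with x >= p are a translate of those of the t-th one, which gives
    I(t + q) + m = I(t) + qt + S(q^2 + m),   m = qt mod p,
  where S(s) counts the points with x < p and q^2 x + p^2 y <= ps. If S(q^2 + m) - m does not depend on
  the residue m, then I(t + q) - I(t) - qt is constant and I is a quadratic with q-periodic constant term.
  Conversely, on the multiples of q a quasipolynomial with quasi-period q is a polynomial; the
  recurrence then makes S(q^2 + m) - m, with m = q^2 k mod p, a p-periodic polynomial in k, hence
  constant, and every residue m occurs because q is invertible mod p.
  The increments S(s + 1) - S(s) count the x < p with ceil(q^2 x / p) = s + 1 (mod p), so the
  condition says that every residue other than q^2 mod p has exactly one preimage. If p divides q^2 + 1,
  then ceil(q^2 x / p) = x (q^2 + 1) / p, which is injective mod p iff (q^2 + 1) / p is prime to p.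
  Conversely, x = 0 is then the only preimage of 0; the symmetry
  ceil(q^2 x / p) + ceil(q^2 (p - x) / p) = q^2 + 1 forces p to divide q^2 + 1, and a common divisor
  g > 1 of (q^2 + 1) / p and p would give the further preimage x = p / g. *)

section \<open>Ceiling division\<close>

definition ceil_div :: "nat \<Rightarrow> nat \<Rightarrow> nat" where
  "ceil_div a p = (a + p - 1) div p"

lemma ceil_div_le_iff:
  assumes "0 < p"
  shows "ceil_div a p \<le> k \<longleftrightarrow> a \<le> p * k"
proof -
  have "ceil_div a p \<le> k \<longleftrightarrow> a + p - 1 < (k + 1) * p"
    unfolding ceil_div_def using assms
    by (metis Suc_eq_plus1 div_less_iff_less_mult less_Suc_eq_le)
  also have "\<dots> \<longleftrightarrow> a \<le> p * k"
    using assms by (simp add: algebra_simps, linarith)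
  finally show ?thesis .
qed

lemma ceil_div_bounds:
  assumes "0 < p"
  shows "a \<le> p * ceil_div a p" and "p * ceil_div a p < a + p"
proof -
  show "a \<le> p * ceil_div a p"
    using ceil_div_le_iff[OF assms] by blast
  show "p * ceil_div a p < a + p"
  proof (cases "ceil_div a p")
    case (Suc c)
    then have "\<not> a \<le> p * c"
      using ceil_div_le_iff[OF assms, of a c] by simp
    then show ?thesis using Suc by simp
  qed (use assms in simp)
qed

lemma ceil_div_mult_diff:
  assumes "r < p"
  shows "ceil_div (p * k - r) p = k"
  unfolding ceil_div_def
proof (rule div_nat_eqI)
  show "p * k \<le> p * k - r + p - 1" and "p * k - r + p - 1 < p * Suc k"
    using assms by (cases k; simp)+
qed

lemma ceil_div_not_dvd:
  assumes "0 < p" "\<not> p dvd a"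
  shows "ceil_div a p = Suc (a div p)"
  unfolding ceil_div_def
proof (rule div_nat_eqI)
  have "0 < a mod p" "a mod p < p"
    using assms by (auto simp: dvd_eq_mod_eq_0)
  moreover have "p * (a div p) + a mod p = a" by simp
  ultimately show "p * Suc (a div p) \<le> a + p - 1" "a + p - 1 < p * Suc (Suc (a div p))"
    by (simp_all add: algebra_simps, linarith+)
qed

lemma diff_div_eq_diff_ceil_div:
  assumes "0 < p" "a \<le> p * s"
  shows "(p * s - a) div p = s - ceil_div a p"
proof (rule div_nat_eqI)
  have c: "a \<le> p * ceil_div a p" "p * ceil_div a p < a + p"
    using ceil_div_bounds[OF assms(1)] by blast+
  have "ceil_div a p \<le> s"
    using ceil_div_le_iff[OF assms(1)] assms(2) by blast
  then have "p * (s - ceil_div a p) = p * s - p * ceil_div a p"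
    by (simp add: diff_mult_distrib2)
  then show "p * (s - ceil_div a p) \<le> p * s - a" "p * s - a < p * Suc (s - ceil_div a p)"
    using c assms(2) \<open>ceil_div a p \<le> s\<close> by (simp_all add: mult_le_mono2)
qed

lemma ceil_div_mult_le:
  assumes "0 < p" "x \<le> p"
  shows "ceil_div (a * x) p \<le> a"
  using assms by (simp add: ceil_div_le_iff mult.commute)

lemma ceil_div_add_ceil_div_complement:
  assumes "0 < p" "\<not> p dvd a" "a \<le> p * k"
  shows "ceil_div a p + ceil_div (p * k - a) p = Suc k"
proof -
  have "\<not> p dvd p * k - a"
    using assms(2,3) by (metis diff_diff_cancel dvd_diff_nat dvd_triv_left)
  then have "ceil_div (p * k - a) p = Suc (k - ceil_div a p)"
    using ceil_div_not_dvd[OF assms(1)] diff_div_eq_diff_ceil_div[OF assms(1,3)] by simp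
  moreover have "ceil_div a p \<le> k"
    using ceil_div_le_iff[OF assms(1)] assms(3) by blast
  ultimately show ?thesis by simp
qed

lemma ceil_div_mult_of_dvd_Suc:
  assumes "p dvd a + 1" "x < p"
  shows "ceil_div (a * x) p = x * ((a + 1) div p)"
proof -
  have "p * ((a + 1) div p) = a + 1"
    using assms(1) by simp
  then have "p * (x * ((a + 1) div p)) = a * x + x"
    by (metis mult.left_commute mult.commute add_mult_distrib2 mult_1_right)
  then have "a * x = p * (x * ((a + 1) div p)) - x"
    by simp
  then show ?thesis
    using ceil_div_mult_diff[OF assms(2)] by simp
qed

lemma ceil_div_mult_add_complement:
  assumes "coprime p a" "0 < x" "x < p"
  shows "ceil_div (a * x) p + ceil_div (a * (p - x)) p = Suc a"
proof -
  have "\<not> p dvd a * x"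
  proof
    assume "p dvd a * x"
    then have "p dvd x"
      using assms(1) by (simp add: coprime_dvd_mult_right_iff)
    then show False
      using assms(2,3) by (auto dest: dvd_imp_le)
  qed
  moreover have "a * (p - x) = p * a - a * x"
    by (metis diff_mult_distrib mult.commute)
  ultimately show ?thesis
    using ceil_div_add_ceil_div_complement[of p "a * x" a] assms(3) by simp
qed

section \<open>Lattice points of the dilated triangle\<close>

definition lattice_count :: "nat \<Rightarrow> nat \<Rightarrow> nat \<Rightarrow> nat" where
  "lattice_count a b n = card {(x, y). a * x + b * y \<le> n}"

lemma finite_lattice_triangle:
  assumes "0 < a" "0 < b"
  shows "finite {(x :: nat, y :: nat). a * x + b * y \<le> n}"
proof (rule finite_subset)
  show "{(x, y). a * x + b * y \<le> n} \<subseteq> {..n} \<times> {..n}"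
  proof (rule subsetI)
    fix z assume "z \<in> {(x, y). a * x + b * y \<le> n}"
    then obtain x y where z: "z = (x, y)" "a * x + b * y \<le> n"
      by blast
    have "x \<le> a * x" "y \<le> b * y"
      using assms by simp_all
    then have "x \<le> n" "y \<le> n"
      using z(2) by linarith+
    then show "z \<in> {..n} \<times> {..n}"
      using z(1) by simp
  qed
qed simp

lemma lattice_count_add:
  assumes "0 < a" "0 < b"
  shows "lattice_count a b (n + a * k)
    = lattice_count a b n + card {(x, y). x < k \<and> a * x + b * y \<le> n + a * k}"
proof -
  define shift where "shift = (\<lambda>(x :: nat, y :: nat). (x + k, y))"
  define A where "A = {(x, y). a * x + b * y \<le> n}"
  define S where "S = {(x, y). x < k \<and> a * x + b * y \<le> n + a * k}"
  have "{(x, y). a * x + b * y \<le> n + a * k} = shift ` A \<union> S"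
  proof (intro equalityI subsetI)
    fix z assume "z \<in> {(x, y). a * x + b * y \<le> n + a * k}"
    then obtain x y where z: "z = (x, y)" "a * x + b * y \<le> n + a * k" by blast
    show "z \<in> shift ` A \<union> S"
    proof (cases "x < k")
      case True
      then show ?thesis using z unfolding S_def by simp
    next
      case False
      then have "a * x = a * (x - k) + a * k" by (simp flip: add_mult_distrib2)
      then have "(x - k, y) \<in> A" using z unfolding A_def by simp
      moreover have "z = shift (x - k, y)" using z False unfolding shift_def by simp
      ultimately show ?thesis by blast
    qed
  next
    fix z assume "z \<in> shift ` A \<union> S"
    then show "z \<in> {(x, y). a * x + b * y \<le> n + a * k}"
      unfolding shift_def A_def S_def by (auto simp: add_mult_distrib2)
  qed
  moreover have "shift ` A \<inter> S = {}"
    unfolding shift_def S_def by auto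
  moreover have "card (shift ` A) = card A"
    by (rule card_image) (auto simp: inj_on_def shift_def)
  moreover have "finite A" "finite S"
    using finite_lattice_triangle[OF assms] unfolding A_def S_def by (auto intro: rev_finite_subset)
  ultimately show ?thesis
    unfolding lattice_count_def A_def[symmetric] S_def[symmetric] by (simp add: card_Un_disjoint)
qed

lemma card_lattice_strip:
  assumes "0 < b" "a * k \<le> N"
  shows "card {(x, y). x < k \<and> a * x + b * y \<le> N} = (\<Sum>x<k. (N - a * x) div b + 1)"
proof -
  have "y \<le> (N - a * x) div b \<longleftrightarrow> a * x + b * y \<le> N" if "x < k" for x y
  proof -
    have "a * x \<le> N"
      using that assms(2) by (meson le_trans less_imp_le_nat mult_le_mono2)
    then show ?thesis
      using assms(1) by (auto simp: less_eq_div_iff_mult_less_eq algebra_simps)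
  qed
  then have "{(x, y). x < k \<and> a * x + b * y \<le> N} = (SIGMA x:{..<k}. {..(N - a * x) div b})"
    by auto
  then show ?thesis by simp
qed

lemma mem_convex_hull_triangle_iff:
  fixes a b x y :: real
  shows "(x, y) \<in> convex hull {(0, 0), (a, 0), (0, b)} \<longleftrightarrow>
      (\<exists>v w. 0 \<le> v \<and> 0 \<le> w \<and> v + w \<le> 1 \<and> x = v * a \<and> y = w * b)"
  (is "_ \<longleftrightarrow> ?R")
proof
  assume "(x, y) \<in> convex hull {(0, 0), (a, 0), (0, b)}"
  then obtain u v w where "0 \<le> u" "0 \<le> v" "0 \<le> w" "u + v + w = 1"
    "(x, y) = u *\<^sub>R (0, 0) + v *\<^sub>R (a, 0) + w *\<^sub>R (0, b)"
    unfolding convex_hull_3 by blast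
  then show ?R by (intro exI[of _ v] exI[of _ w]) auto
next
  assume ?R
  then obtain v w where "0 \<le> v" "0 \<le> w" "v + w \<le> 1" "x = v * a" "y = w * b"
    by blast
  then have "(x, y) = (1 - v - w) *\<^sub>R (0, 0) + v *\<^sub>R (a, 0) + w *\<^sub>R (0, b)
      \<and> 0 \<le> 1 - v - w \<and> 0 \<le> v \<and> 0 \<le> w \<and> (1 - v - w) + v + w = 1"
    by simp
  then show "(x, y) \<in> convex hull {(0, 0), (a, 0), (0, b)}"
    unfolding convex_hull_3 by blast
qed

lemma mem_scaled_triangle_iff:
  fixes a b t x y :: real
  assumes "0 < a" "0 < b" "0 \<le> t"
  shows "(x, y) \<in> (\<lambda>v. t *\<^sub>R v) ` triangle a b \<longleftrightarrow> 0 \<le> x \<and> 0 \<le> y \<and> b * x + a * y \<le> t * a * b"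
proof -
  have "(\<lambda>v. t *\<^sub>R v) ` triangle a b = convex hull {(0, 0), (t * a, 0), (0, t * b)}"
    unfolding triangle_def by (simp flip: convex_hull_scaling)
  moreover have "(\<exists>v w. 0 \<le> v \<and> 0 \<le> w \<and> v + w \<le> 1 \<and> x = v * (t * a) \<and> y = w * (t * b))
      \<longleftrightarrow> 0 \<le> x \<and> 0 \<le> y \<and> b * x + a * y \<le> t * a * b"
  proof
    assume "\<exists>v w. 0 \<le> v \<and> 0 \<le> w \<and> v + w \<le> 1 \<and> x = v * (t * a) \<and> y = w * (t * b)"
    then obtain v w where "0 \<le> v" "0 \<le> w" "v + w \<le> 1" "x = v * (t * a)" "y = w * (t * b)"
      by blast
    moreover have "b * x + a * y = (v + w) * (t * a * b)"
      using \<open>x = _\<close> \<open>y = _\<close> by (simp add: algebra_simps)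
    ultimately show "0 \<le> x \<and> 0 \<le> y \<and> b * x + a * y \<le> t * a * b"
      using assms by (simp add: mult_left_le_one_le)
  next
    assume h: "0 \<le> x \<and> 0 \<le> y \<and> b * x + a * y \<le> t * a * b"
    show "\<exists>v w. 0 \<le> v \<and> 0 \<le> w \<and> v + w \<le> 1 \<and> x = v * (t * a) \<and> y = w * (t * b)"
    proof (cases "t = 0")
      case True
      then have "x = 0" "y = 0"
        using h assms by (smt (verit) mult_pos_pos mult_nonneg_nonneg mult_le_0_iff)+
      then show ?thesis by (intro exI[of _ 0]) simp
    next
      case False
      then have "0 < t" using assms by simp
      have "x / (t * a) + y / (t * b) = (b * x + a * y) / (t * a * b)"
        using assms \<open>0 < t\<close> by (simp add: field_simps)
      also have "\<dots> \<le> 1" using h assms \<open>0 < t\<close> by simp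
      finally show ?thesis using h assms \<open>0 < t\<close>
        by (intro exI[of _ "x / (t * a)"] exI[of _ "y / (t * b)"]) simp
    qed
  qed
  ultimately show ?thesis
    by (simp add: mem_convex_hull_triangle_iff)
qed

lemma int_mem_scaled_triangle_iff:
  fixes a b n t :: nat and X Y :: int
  assumes "0 < a" "0 < b" "0 < n"
  shows "(real_of_int X, real_of_int Y) \<in> (\<lambda>v. real t *\<^sub>R v) ` triangle (real n / real a) (real n / real b)
    \<longleftrightarrow> 0 \<le> X \<and> 0 \<le> Y \<and> a * X + b * Y \<le> n * t"
proof -
  have "real n / real b * X + real n / real a * Y \<le> real t * (real n / real a) * (real n / real b)
      \<longleftrightarrow> (real a * X + real b * Y) * (real n / (real a * real b))
          \<le> (real n * real t) * (real n / (real a * real b))"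
    using assms by (simp add: field_simps)
  also have "\<dots> \<longleftrightarrow> real a * X + real b * Y \<le> real n * real t"
    by (rule mult_le_cancel_right_pos) (use assms in simp)
  also have "\<dots> \<longleftrightarrow> real_of_int (a * X + b * Y) \<le> real_of_int (n * t)"
    by simp
  also have "\<dots> \<longleftrightarrow> a * X + b * Y \<le> n * t"
    by (rule of_int_le_iff)
  finally show ?thesis
    using assms by (simp add: mem_scaled_triangle_iff)
qed

lemma ehrhart_triangle:
  fixes a b n t :: nat
  assumes "0 < a" "0 < b" "0 < n"
  shows "ehrhart (triangle (real n / real a) (real n / real b)) t = lattice_count a b (n * t)"
proof -
  let ?P = "(\<lambda>v. real t *\<^sub>R v) ` triangle (real n / real a) (real n / real b)"
  note mem = int_mem_scaled_triangle_iff[OF assms, of _ _ t]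
  have "{z :: int \<times> int. (real_of_int (fst z), real_of_int (snd z)) \<in> ?P}
      = (\<lambda>(x, y). (int x, int y)) ` {(x, y). a * x + b * y \<le> n * t}"
  proof (intro equalityI subsetI)
    fix z :: "int \<times> int"
    assume "z \<in> {z. (real_of_int (fst z), real_of_int (snd z)) \<in> ?P}"
    then obtain X Y :: int where z: "z = (X, Y)" "0 \<le> X" "0 \<le> Y" "a * X + b * Y \<le> n * t"
      using mem by (cases z) auto
    then have "int (a * nat X + b * nat Y) \<le> int (n * t)"
      by simp
    then have "(nat X, nat Y) \<in> {(x, y). a * x + b * y \<le> n * t}"
      by (simp only: of_nat_le_iff mem_Collect_eq case_prod_conv)
    then show "z \<in> (\<lambda>(x, y). (int x, int y)) ` {(x, y). a * x + b * y \<le> n * t}"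
      using z by (auto intro!: image_eqI[of _ _ "(nat X, nat Y)"])
  next
    fix z :: "int \<times> int"
    assume "z \<in> (\<lambda>(x, y). (int x, int y)) ` {(x, y). a * x + b * y \<le> n * t}"
    then obtain x y where "z = (int x, int y)" "a * x + b * y \<le> n * t"
      by auto
    moreover have "int a * int x + int b * int y \<le> int n * int t"
      using \<open>a * x + b * y \<le> n * t\<close> by (simp flip: of_nat_mult of_nat_add)
    ultimately show "z \<in> {z. (real_of_int (fst z), real_of_int (snd z)) \<in> ?P}"
      using mem by simp
  qed
  moreover have "inj (\<lambda>(x :: nat, y :: nat). (int x, int y))"
    by (auto simp: inj_def)
  ultimately show ?thesis
    unfolding ehrhart_def lattice_count_def by (simp add: card_image inj_on_subset)
qed

section \<open>A recurrence for the lattice point count\<close>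

(* For q^2 <= s, this counts the lattice points (x, y) with x < p and q^2 x + p^2 y <= p s. *)
definition strip_count :: "nat \<Rightarrow> nat \<Rightarrow> nat \<Rightarrow> nat" where
  "strip_count p q s = (\<Sum>x<p. (s - ceil_div (q\<^sup>2 * x) p) div p + 1)"

definition residue_fiber :: "nat \<Rightarrow> nat \<Rightarrow> nat \<Rightarrow> nat set" where
  "residue_fiber p q r = {x. x < p \<and> ceil_div (q\<^sup>2 * x) p mod p = r}"

lemma lattice_count_step:
  assumes "0 < p" "0 < q"
  shows "lattice_count (q\<^sup>2) (p\<^sup>2) (p * q * (t + q))
    = lattice_count (q\<^sup>2) (p\<^sup>2) (p * q * t) + strip_count p q (q * t + q\<^sup>2)"
proof -
  have column: "(p * q * t + q\<^sup>2 * p - q\<^sup>2 * x) div p\<^sup>2 + 1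
      = (q * t + q\<^sup>2 - ceil_div (q\<^sup>2 * x) p) div p + 1" if "x < p" for x
  proof -
    have "q\<^sup>2 * x \<le> q\<^sup>2 * p"
      using that by simp
    also have "\<dots> \<le> p * (q * t + q\<^sup>2)"
      by (simp add: distrib_left)
    finally have "q\<^sup>2 * x \<le> p * (q * t + q\<^sup>2)" .
    moreover have "p * q * t + q\<^sup>2 * p = p * (q * t + q\<^sup>2)"
      by (simp add: algebra_simps)
    ultimately show ?thesis
      using assms(1) by (simp add: power2_eq_square div_mult2_eq diff_div_eq_diff_ceil_div)
  qed
  have "p * q * (t + q) = p * q * t + q\<^sup>2 * p"
    by (simp add: algebra_simps power2_eq_square)
  then have "lattice_count (q\<^sup>2) (p\<^sup>2) (p * q * (t + q)) = lattice_count (q\<^sup>2) (p\<^sup>2) (p * q * t)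
      + card {(x, y). x < p \<and> q\<^sup>2 * x + p\<^sup>2 * y \<le> p * q * t + q\<^sup>2 * p}"
    using lattice_count_add assms by simp
  also have "card {(x, y). x < p \<and> q\<^sup>2 * x + p\<^sup>2 * y \<le> p * q * t + q\<^sup>2 * p}
      = (\<Sum>x<p. (p * q * t + q\<^sup>2 * p - q\<^sup>2 * x) div p\<^sup>2 + 1)"
    using assms by (intro card_lattice_strip) simp_all
  also have "\<dots> = strip_count p q (q * t + q\<^sup>2)"
    unfolding strip_count_def using column by (intro sum.cong) simp_all
  finally show ?thesis .
qed

lemma strip_count_add_mult:
  assumes "0 < p" "q\<^sup>2 \<le> s"
  shows "strip_count p q (s + p * z) = strip_count p q s + p * z"
proof -
  have "(s + p * z - ceil_div (q\<^sup>2 * x) p) div p + 1 = ((s - ceil_div (q\<^sup>2 * x) p) div p + 1) + z"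
    if "x < p" for x
  proof -
    have "ceil_div (q\<^sup>2 * x) p \<le> s"
      using ceil_div_mult_le[OF assms(1), of x "q\<^sup>2"] that assms(2) by simp
    then have "s + p * z - ceil_div (q\<^sup>2 * x) p = (s - ceil_div (q\<^sup>2 * x) p) + z * p"
      by (simp add: mult.commute)
    then show ?thesis
      using assms(1) by simp
  qed
  then have "strip_count p q (s + p * z) = (\<Sum>x<p. ((s - ceil_div (q\<^sup>2 * x) p) div p + 1) + z)"
    unfolding strip_count_def by (intro sum.cong) simp_all
  also have "\<dots> = strip_count p q s + p * z"
    unfolding strip_count_def by (simp only: sum.distrib sum_constant card_lessThan) simp
  finally show ?thesis .
qed

lemma strip_count_Suc:
  assumes "0 < p" "q\<^sup>2 \<le> s"
  shows "strip_count p q (Suc s) = strip_count p q s + card (residue_fiber p q (Suc s mod p))"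
proof -
  have "(Suc s - ceil_div (q\<^sup>2 * x) p) div p
      = (s - ceil_div (q\<^sup>2 * x) p) div p + of_bool (ceil_div (q\<^sup>2 * x) p mod p = Suc s mod p)"
    if "x < p" for x
  proof -
    have le: "ceil_div (q\<^sup>2 * x) p \<le> s"
      using ceil_div_mult_le[OF assms(1), of x "q\<^sup>2"] that assms(2) by simp
    then have "Suc s - ceil_div (q\<^sup>2 * x) p = Suc (s - ceil_div (q\<^sup>2 * x) p)"
      by simp
    moreover have "Suc (s - ceil_div (q\<^sup>2 * x) p) mod p = 0
        \<longleftrightarrow> ceil_div (q\<^sup>2 * x) p mod p = Suc s mod p"
      using le by (simp add: mod_eq_dvd_iff_nat Suc_diff_le dvd_eq_mod_eq_0 eq_commute[of _ "Suc s mod p"])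
    ultimately show ?thesis
      by (simp add: div_Suc)
  qed
  then have "strip_count p q (Suc s)
      = (\<Sum>x<p. ((s - ceil_div (q\<^sup>2 * x) p) div p + 1)
          + of_bool (ceil_div (q\<^sup>2 * x) p mod p = Suc s mod p))"
    unfolding strip_count_def by (intro sum.cong) simp_all
  also have "\<dots> = strip_count p q s
      + (\<Sum>x<p. of_bool (ceil_div (q\<^sup>2 * x) p mod p = Suc s mod p))"
    unfolding strip_count_def by (rule sum.distrib)
  also have "(\<Sum>x<p. of_bool (ceil_div (q\<^sup>2 * x) p mod p = Suc s mod p)) = card (residue_fiber p q (Suc s mod p))"
    unfolding residue_fiber_def by (simp add: Int_def lessThan_def)
  finally show ?thesis .
qed

lemma lattice_count_recurrence:
  assumes "0 < p" "0 < q"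
  shows "lattice_count (q\<^sup>2) (p\<^sup>2) (p * q * (t + q)) + q * t mod p
    = lattice_count (q\<^sup>2) (p\<^sup>2) (p * q * t) + q * t + strip_count p q (q\<^sup>2 + q * t mod p)"
proof -
  have "q * t + q\<^sup>2 = (q\<^sup>2 + q * t mod p) + p * (q * t div p)"
    by simp
  then have "strip_count p q (q * t + q\<^sup>2) = strip_count p q (q\<^sup>2 + q * t mod p) + p * (q * t div p)"
    using strip_count_add_mult[OF assms(1), of q "q\<^sup>2 + q * t mod p"] by (simp only: le_add1)
  moreover have "p * (q * t div p) + q * t mod p = q * t"
    by simp
  ultimately show ?thesis
    using lattice_count_step[OF assms, of t] by linarith
qed

lemma strip_count_linear_iff:
  assumes "0 < p"
  shows "(\<forall>m<p. strip_count p q (q\<^sup>2 + m) = strip_count p q (q\<^sup>2) + m)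
    \<longleftrightarrow> (\<forall>m. Suc m < p \<longrightarrow> card (residue_fiber p q ((q\<^sup>2 + Suc m) mod p)) = 1)"
proof -
  have step: "strip_count p q (q\<^sup>2 + Suc m)
      = strip_count p q (q\<^sup>2 + m) + card (residue_fiber p q ((q\<^sup>2 + Suc m) mod p))" for m
    using strip_count_Suc[OF assms, of q "q\<^sup>2 + m"] by simp
  show ?thesis
  proof
    assume lin: "\<forall>m<p. strip_count p q (q\<^sup>2 + m) = strip_count p q (q\<^sup>2) + m"
    show "\<forall>m. Suc m < p \<longrightarrow> card (residue_fiber p q ((q\<^sup>2 + Suc m) mod p)) = 1"
    proof (intro allI impI)
      fix m assume "Suc m < p"
      then show "card (residue_fiber p q ((q\<^sup>2 + Suc m) mod p)) = 1"
        using lin[rule_format, of m] lin[rule_format, of "Suc m"] step[of m] by simp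
    qed
  next
    assume fib: "\<forall>m. Suc m < p \<longrightarrow> card (residue_fiber p q ((q\<^sup>2 + Suc m) mod p)) = 1"
    show "\<forall>m<p. strip_count p q (q\<^sup>2 + m) = strip_count p q (q\<^sup>2) + m"
    proof (intro allI impI)
      fix m assume "m < p"
      then show "strip_count p q (q\<^sup>2 + m) = strip_count p q (q\<^sup>2) + m"
      proof (induction m)
        case (Suc m)
        then show ?case using step[of m] fib by simp
      qed simp
    qed
  qed
qed

section \<open>Quasi-periods\<close>

lemma quasi_period_if_quadratic_step:
  fixes f :: "nat \<Rightarrow> real"
  assumes "0 < q" and step: "\<And>t. f (t + q) = f t + real q * real t + e"
  shows "quasi_period f q"
proof -
  define \<alpha> where "\<alpha> = e / q - q / 2"
  define g where "g t = f t - \<alpha> * t - t\<^sup>2 / 2" for t :: nat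
  have "g (t + q) = g t" for t
    using step[of t] assms(1) unfolding g_def \<alpha>_def by (simp add: field_simps power2_eq_square)
  moreover have "f t = g t + \<alpha> * t + 1 / 2 * t\<^sup>2" for t
    unfolding g_def by simp
  ultimately show ?thesis
    unfolding quasi_period_def
    by (intro exI[of _ 2] exI[of _ "\<lambda>i. [g, \<lambda>_. \<alpha>, \<lambda>_. 1 / 2] ! i"])
       (auto simp: numeral_2_eq_2 le_Suc_eq)
qed

lemma poly_on_multiples_if_quasi_period:
  assumes "quasi_period f q" "0 < q"
  shows "\<exists>P. \<forall>k. f (Suc k * q) = poly P (real k)"
proof -
  obtain d c where per: "\<forall>i\<le>d. \<forall>t. c i (t + q) = c i t"
    and eq: "\<forall>t\<ge>1. f t = (\<Sum>i\<le>d. c i t * real t ^ i)"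
    using assms(1) unfolding quasi_period_def by blast
  have periodic: "c i (k * q) = c i 0" if "i \<le> d" for i k
  proof (induction k)
    case (Suc k)
    then show ?case using per that by (simp add: add.commute[of q])
  qed simp
  have "f (Suc k * q) = poly (\<Sum>i\<le>d. smult (c i 0) ([:real q, real q:] ^ i)) (real k)" for k
  proof -
    have "f (Suc k * q) = (\<Sum>i\<le>d. c i (Suc k * q) * real (Suc k * q) ^ i)"
      by (rule eq[rule_format]) (use assms(2) in simp)
    also have "\<dots> = (\<Sum>i\<le>d. c i 0 * (real q + real q * real k) ^ i)"
    proof (rule sum.cong)
      fix i assume "i \<in> {..d}"
      then show "c i (Suc k * q) * real (Suc k * q) ^ i = c i 0 * (real q + real q * real k) ^ i"
        using periodic[of i "Suc k"] by (simp add: algebra_simps)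
    qed simp
    finally show ?thesis
      by (simp add: poly_sum mult.commute)
  qed
  then show ?thesis by blast
qed

lemma poly_const_if_periodic:
  fixes P :: "real poly"
  assumes "0 < p" and periodic: "\<And>k. poly P (real (k + p)) = poly P (real k)"
  shows "poly P (real k) = poly P 0"
proof -
  have roots: "poly (P - [:poly P 0:]) (real (j * p)) = 0" for j
  proof (induction j)
    case (Suc j)
    have "Suc j * p = j * p + p" by simp
    then show ?case using periodic[of "j * p"] Suc by (simp only:) simp
  qed simp
  have "inj (\<lambda>j. real (j * p))"
    using assms(1) by (auto simp: inj_def)
  then have "infinite (range (\<lambda>j. real (j * p)))"
    by (rule range_inj_infinite)
  moreover have "range (\<lambda>j. real (j * p)) \<subseteq> {x. poly (P - [:poly P 0:]) x = 0}"
    using roots by auto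
  ultimately have "P - [:poly P 0:] = 0"
    using poly_roots_finite finite_subset by blast
  then have "poly (P - [:poly P 0:]) (real k) = 0"
    by simp
  then show ?thesis
    by simp
qed

lemma mod_mult_Suc_surj:
  fixes a p m :: nat
  assumes "coprime a p" "m < p"
  shows "\<exists>k. a * Suc k mod p = m"
proof -
  obtain u where u: "[a * u = 1] (mod p)"
    using cong_solve_coprime_nat[OF assms(1)] by auto
  have "[a * (u * m + p) = m] (mod p)"
    using cong_scalar_right[OF u, of m] by (simp add: cong_def algebra_simps)
  moreover have "u * m + p = Suc (u * m + p - 1)"
    using assms(2) by simp
  ultimately have "a * Suc (u * m + p - 1) mod p = m"
    using assms(2) unfolding cong_def by simp
  then show ?thesis ..
qed

lemma quasi_period_if_strip_count_linear:
  assumes "0 < p" "0 < q"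
    and linear: "\<forall>m<p. strip_count p q (q\<^sup>2 + m) = strip_count p q (q\<^sup>2) + m"
  shows "quasi_period (\<lambda>t. real (lattice_count (q\<^sup>2) (p\<^sup>2) (p * q * t))) q"
proof (rule quasi_period_if_quadratic_step[OF assms(2)])
  fix t
  have "lattice_count (q\<^sup>2) (p\<^sup>2) (p * q * (t + q))
      = lattice_count (q\<^sup>2) (p\<^sup>2) (p * q * t) + q * t + strip_count p q (q\<^sup>2)"
    using lattice_count_recurrence[OF assms(1,2), of t] linear assms(1) by simp
  then show "real (lattice_count (q\<^sup>2) (p\<^sup>2) (p * q * (t + q)))
      = real (lattice_count (q\<^sup>2) (p\<^sup>2) (p * q * t)) + real q * real t + real (strip_count p q (q\<^sup>2))"
    by simp
qed

lemma strip_count_linear_if_quasi_period: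
  assumes "0 < p" "0 < q" "coprime p q"
    and "quasi_period (\<lambda>t. real (lattice_count (q\<^sup>2) (p\<^sup>2) (p * q * t))) q"
  shows "\<forall>m<p. strip_count p q (q\<^sup>2 + m) = strip_count p q (q\<^sup>2) + m"
proof -
  let ?f = "\<lambda>t. real (lattice_count (q\<^sup>2) (p\<^sup>2) (p * q * t))"
  define G where "G m = real (strip_count p q (q\<^sup>2 + m)) - real m" for m
  obtain P where P: "\<And>k. ?f (Suc k * q) = poly P (real k)"
    using poly_on_multiples_if_quasi_period[OF assms(4,2)] by blast
  define \<Psi> where "\<Psi> = pcompose P [:1, 1:] - P - smult (real (q\<^sup>2)) [:1, 1:]"
  have \<Psi>: "poly \<Psi> (real k) = G (q\<^sup>2 * Suc k mod p)" for k
  proof -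
    have "q * (Suc k * q) = q\<^sup>2 * Suc k"
      by (simp add: power2_eq_square algebra_simps)
    moreover have "Suc k * q + q = Suc (Suc k) * q"
      by simp
    ultimately have "?f (Suc (Suc k) * q) + real (q\<^sup>2 * Suc k mod p)
        = ?f (Suc k * q) + real (q\<^sup>2 * Suc k) + real (strip_count p q (q\<^sup>2 + q\<^sup>2 * Suc k mod p))"
      using lattice_count_recurrence[OF assms(1,2), of "Suc k * q"] by (metis of_nat_add)
    then show ?thesis
      unfolding \<Psi>_def G_def P by (simp add: poly_pcompose algebra_simps)
  qed
  have "poly \<Psi> (real (k + p)) = poly \<Psi> (real k)" for k
  proof -
    have "q\<^sup>2 * Suc (k + p) = q\<^sup>2 * Suc k + q\<^sup>2 * p"
      by (simp add: algebra_simps)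
    then have "q\<^sup>2 * Suc (k + p) mod p = q\<^sup>2 * Suc k mod p"
      by (metis mod_mult_self1)
    then show ?thesis
      unfolding \<Psi> by (simp only:)
  qed
  then have "G (q\<^sup>2 * Suc k mod p) = poly \<Psi> 0" for k
    using poly_const_if_periodic[OF assms(1)] \<Psi> by metis
  moreover have "coprime (q\<^sup>2) p"
    using assms(3) by (simp add: coprime_commute)
  ultimately have "G m = G 0" if "m < p" for m
    using mod_mult_Suc_surj that assms(1) by metis
  then show ?thesis
    unfolding G_def by (smt (verit) add.right_neutral of_nat_0 of_nat_add of_nat_eq_iff)
qed

section \<open>The arithmetic condition\<close>

lemma card_mult_mod_eq_1:
  fixes g p r :: nat
  assumes "coprime g p" "r < p"
  shows "card {x. x < p \<and> x * g mod p = r} = 1"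
proof -
  obtain u where u: "[g * u = 1] (mod p)"
    using cong_solve_coprime_nat[OF assms(1)] by auto
  define x0 where "x0 = u * r mod p"
  have "[x0 * g = r] (mod p)"
    using cong_scalar_right[OF u, of r] unfolding x0_def
    by (simp add: cong_def mod_mult_right_eq algebra_simps)
  then have "x0 * g mod p = r"
    using assms(2) by (simp add: cong_def)
  moreover have "x = x0" if "x < p" "x * g mod p = r" for x
  proof -
    have "[x * g = x0 * g] (mod p)"
      using that(2) \<open>x0 * g mod p = r\<close> by (simp add: cong_def)
    then have "[x = x0] (mod p)"
      using cong_mult_rcancel_nat[OF assms(1)] by blast
    then show ?thesis
      using that(1) assms(2) unfolding x0_def cong_def by simp
  qed
  moreover have "x0 < p"
    using assms(2) unfolding x0_def by simp
  ultimately have "{x. x < p \<and> x * g mod p = r} = {x0}"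
    by blast
  then show ?thesis by simp
qed

lemma card_residue_fiber_eq_1:
  assumes "p dvd q\<^sup>2 + 1" "coprime ((q\<^sup>2 + 1) div p) p" "r < p"
  shows "card (residue_fiber p q r) = 1"
proof -
  have "residue_fiber p q r = {x. x < p \<and> x * ((q\<^sup>2 + 1) div p) mod p = r}"
    unfolding residue_fiber_def using ceil_div_mult_of_dvd_Suc[OF assms(1)] by auto
  then show ?thesis
    using card_mult_mod_eq_1[OF assms(2,3)] by simp
qed

context
  fixes p q :: nat
  assumes p: "2 \<le> p" and coprime: "coprime p (q\<^sup>2)"
    and unique: "\<forall>m. Suc m < p \<longrightarrow> card (residue_fiber p q ((q\<^sup>2 + Suc m) mod p)) = 1"
begin

lemma unique_fibers_imp_fiber_zero:
  "residue_fiber p q 0 = {0}"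
proof -
  define R where "R = q\<^sup>2 mod p"
  have "R \<noteq> 0"
  proof
    assume "R = 0"
    then have "p dvd q\<^sup>2"
      unfolding R_def by auto
    then have "p = 1"
      using coprime_common_divisor_nat[OF coprime dvd_refl] by simp
    then show False
      using p by simp
  qed
  moreover have "R < p"
    using p unfolding R_def by simp
  moreover have "q\<^sup>2 = p * (q\<^sup>2 div p) + R"
    unfolding R_def by simp
  moreover have "p * (q\<^sup>2 div p + 1) = p * (q\<^sup>2 div p) + p"
    by simp
  ultimately have "q\<^sup>2 + Suc (p - R - 1) = p * (q\<^sup>2 div p + 1)"
    by linarith
  then have "(q\<^sup>2 + Suc (p - R - 1)) mod p = 0"
    by simp
  moreover have "Suc (p - R - 1) < p"
    using \<open>R \<noteq> 0\<close> \<open>R < p\<close> by simp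
  ultimately have "card (residue_fiber p q 0) = 1"
    using unique by metis
  then obtain z where z: "residue_fiber p q 0 = {z}"
    by (rule card_1_singletonE)
  moreover have "0 \<in> residue_fiber p q 0"
    using p unfolding residue_fiber_def ceil_div_def by simp
  ultimately show ?thesis
    by simp
qed

lemma unique_fibers_imp_dvd:
  "p dvd q\<^sup>2 + 1"
proof -
  have "card (residue_fiber p q ((q\<^sup>2 + 1) mod p)) = 1"
    using unique[rule_format, of 0] p by simp
  then obtain x where "residue_fiber p q ((q\<^sup>2 + 1) mod p) = {x}"
    by (rule card_1_singletonE)
  then have x: "x < p" "ceil_div (q\<^sup>2 * x) p mod p = (q\<^sup>2 + 1) mod p"
    unfolding residue_fiber_def by blast+
  show ?thesis
  proof (cases "x = 0")
    case True
    then show ?thesis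
      using x(2) p unfolding ceil_div_def by (simp add: dvd_eq_mod_eq_0)
  next
    case False
    then have "ceil_div (q\<^sup>2 * (p - x)) p + ceil_div (q\<^sup>2 * x) p = q\<^sup>2 + 1"
      using ceil_div_mult_add_complement[OF coprime _ x(1)] by simp
    then have "[ceil_div (q\<^sup>2 * (p - x)) p + ceil_div (q\<^sup>2 * x) p = 0 + ceil_div (q\<^sup>2 * x) p] (mod p)"
      using x(2) unfolding cong_def by simp
    then have "ceil_div (q\<^sup>2 * (p - x)) p mod p = 0"
      unfolding cong_add_rcancel_nat by (simp add: cong_def)
    then have "p - x \<in> residue_fiber p q 0"
      using x(1) False unfolding residue_fiber_def by simp
    then show ?thesis
      using unique_fibers_imp_fiber_zero x(1) False by simp
  qed
qed

lemma unique_fibers_imp_coprime: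
  "coprime ((q\<^sup>2 + 1) div p) p"
proof (rule ccontr)
  define Q where "Q = (q\<^sup>2 + 1) div p"
  define g where "g = gcd Q p"
  assume "\<not> coprime ((q\<^sup>2 + 1) div p) p"
  then have "g \<noteq> 1"
    unfolding g_def Q_def coprime_iff_gcd_eq_1 .
  moreover have "0 < g"
    using p unfolding g_def by simp
  moreover obtain x where x: "p = g * x"
    unfolding g_def by (meson gcd_dvd2 dvdE)
  moreover have "0 < x"
    using p x by (cases "x = 0") auto
  ultimately have "x < p"
    by simp
  obtain Q' where "Q = g * Q'"
    unfolding g_def by (meson gcd_dvd1 dvdE)
  then have "ceil_div (q\<^sup>2 * x) p = p * Q'"
    using ceil_div_mult_of_dvd_Suc[OF unique_fibers_imp_dvd \<open>x < p\<close>] x unfolding Q_def by simp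
  then have "x \<in> residue_fiber p q 0"
    using \<open>x < p\<close> unfolding residue_fiber_def by simp
  then show False
    using unique_fibers_imp_fiber_zero \<open>0 < x\<close> by simp
qed

end

lemma unique_residue_fibers_iff:
  assumes "0 < p" "coprime p q"
  shows "(\<forall>m. Suc m < p \<longrightarrow> card (residue_fiber p q ((q\<^sup>2 + Suc m) mod p)) = 1)
    \<longleftrightarrow> p dvd q\<^sup>2 + 1 \<and> coprime ((q\<^sup>2 + 1) div p) p"
proof (cases "p = 1")
  case False
  then have "2 \<le> p"
    using assms(1) by simp
  show ?thesis
  proof
    assume "\<forall>m. Suc m < p \<longrightarrow> card (residue_fiber p q ((q\<^sup>2 + Suc m) mod p)) = 1"
    moreover have "coprime p (q\<^sup>2)"
      using assms(2) by simp
    ultimately show "p dvd q\<^sup>2 + 1 \<and> coprime ((q\<^sup>2 + 1) div p) p"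
      using unique_fibers_imp_dvd unique_fibers_imp_coprime \<open>2 \<le> p\<close> by blast
  next
    assume "p dvd q\<^sup>2 + 1 \<and> coprime ((q\<^sup>2 + 1) div p) p"
    then show "\<forall>m. Suc m < p \<longrightarrow> card (residue_fiber p q ((q\<^sup>2 + Suc m) mod p)) = 1"
      using card_residue_fiber_eq_1 assms(1) by simp
  qed
qed simp

theorem theorem3p1:
  fixes p q :: nat
  assumes "p > 0" and "q > 0" and "coprime p q"
  shows "quasi_period (\<lambda>t. real (ehrhart (triangle (real p / real q) (real q / real p)) t)) q
     \<longleftrightarrow> (p dvd (q^2 + 1) \<and> gcd ((q^2 + 1) div p) p = 1)"
proof -
  have "triangle (real p / real q) (real q / real p)
      = triangle (real (p * q) / real (q\<^sup>2)) (real (p * q) / real (p\<^sup>2))"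
    using assms(1,2) by (simp add: power2_eq_square)
  then have ehrhart: "ehrhart (triangle (real p / real q) (real q / real p)) t
      = lattice_count (q\<^sup>2) (p\<^sup>2) (p * q * t)" for t
    using ehrhart_triangle[of "q\<^sup>2" "p\<^sup>2" "p * q"] assms(1,2) by simp
  have "quasi_period (\<lambda>t. real (lattice_count (q\<^sup>2) (p\<^sup>2) (p * q * t))) q
      \<longleftrightarrow> (\<forall>m<p. strip_count p q (q\<^sup>2 + m) = strip_count p q (q\<^sup>2) + m)"
    using quasi_period_if_strip_count_linear strip_count_linear_if_quasi_period assms by blast
  also have "\<dots> \<longleftrightarrow> (\<forall>m. Suc m < p \<longrightarrow> card (residue_fiber p q ((q\<^sup>2 + Suc m) mod p)) = 1)"
    by (rule strip_count_linear_iff[OF assms(1)])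
  also have "\<dots> \<longleftrightarrow> p dvd q\<^sup>2 + 1 \<and> coprime ((q\<^sup>2 + 1) div p) p"
    by (rule unique_residue_fibers_iff[OF assms(1,3)])
  finally show ?thesis
    by (simp add: ehrhart coprime_iff_gcd_eq_1)
qed

end
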